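(* Let $G_1$ and $G_2$ be TRVGs with $V(G_1)\cap V(G_2)=\{v\}$. Suppose that for each $i\in\{1,2\}$ there is a rectangle representation of $G_i$ in which the rectangle for $v$ sees no other rectangle in one of the two directions (i.e., either no horizontal line or no vertical line meets the interiors of both the rectangle for $v$ and another rectangle of the representation). Then $G_1\cup G_2=(V(G_1)\cup V(G_2),E(G_1)\cup E(G_2))$ is a TRVG.
   Context: A graph $G$ is a transparent rectangle visibility graph (TRVG) if its vertices can be represented by a collection of pairwise non-overlapping rectangles in the plane whose sides are parallel to the coordinate axes, one per vertex, such that two distinct vertices are adjacent if and only if there is a horizontal or a vertical line intersecting the interiors of both of their rectangles (other rectangles do not block visibility). Two rectangles see each other horizontally (resp. vertically) if some horizontal (resp. vertical) line meets the interiors of both. *)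

theory Defs
  imports Complex_Main
begin

text \<open>An axis-parallel rectangle [x1,x2] x [y1,y2] is stored as ((x1,x2),(y1,y2)).\<close>
type_synonym rect = "(real \<times> real) \<times> (real \<times> real)"

definition valid_rect :: "rect \<Rightarrow> bool" where
  "valid_rect R \<longleftrightarrow> fst (fst R) < snd (fst R) \<and> fst (snd R) < snd (snd R)"

definition xint :: "rect \<Rightarrow> real set" where
  "xint R = {fst (fst R) <..< snd (fst R)}"

definition yint :: "rect \<Rightarrow> real set" where
  "yint R = {fst (snd R) <..< snd (snd R)}"

definition rect_interior :: "rect \<Rightarrow> (real \<times> real) set" where
  "rect_interior R = xint R \<times> yint R"

definition sees_h :: "rect \<Rightarrow> rect \<Rightarrow> bool" where
  "sees_h R S \<longleftrightarrow> (\<exists>c. c \<in> yint R \<and> c \<in> yint S)"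

definition sees_v :: "rect \<Rightarrow> rect \<Rightarrow> bool" where
  "sees_v R S \<longleftrightarrow> (\<exists>c. c \<in> xint R \<and> c \<in> xint S)"

definition simple_graph :: "'a set \<Rightarrow> 'a set set \<Rightarrow> bool" where
  "simple_graph V E \<longleftrightarrow> finite V \<and>
     (\<forall>e\<in>E. \<exists>u w. u \<noteq> w \<and> u \<in> V \<and> w \<in> V \<and> e = {u, w})"

definition trvg_rep :: "'a set \<Rightarrow> 'a set set \<Rightarrow> ('a \<Rightarrow> rect) \<Rightarrow> bool" where
  "trvg_rep V E r \<longleftrightarrow>
     (\<forall>u\<in>V. valid_rect (r u)) \<and>
     (\<forall>u\<in>V. \<forall>w\<in>V. u \<noteq> w \<longrightarrow> rect_interior (r u) \<inter> rect_interior (r w) = {}) \<and>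
     (\<forall>u\<in>V. \<forall>w\<in>V. u \<noteq> w \<longrightarrow>
        ({u, w} \<in> E \<longleftrightarrow> sees_h (r u) (r w) \<or> sees_v (r u) (r w)))"

definition TRVG :: "'a set \<Rightarrow> 'a set set \<Rightarrow> bool" where
  "TRVG V E \<longleftrightarrow> simple_graph V E \<and> (\<exists>r. trvg_rep V E r)"

end

theory Submission
  imports Defs
begin

text \<open>Transposing a representation if necessary, we may assume that \<open>v\<close> sees nothing
horizontally in the representation of \<open>G\<^sub>1\<close> and nothing vertically in that of
\<open>G\<^sub>2\<close>. Squeeze the representation of \<open>G\<^sub>1\<close> horizontally into the x-range of
the rectangle of \<open>v\<close> for \<open>G\<^sub>2\<close>, and that of \<open>G\<^sub>2\<close> vertically into the
y-range of the rectangle of \<open>v\<close> for \<open>G\<^sub>1\<close>, by strictly increasing maps; the new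
rectangle of \<open>v\<close> takes the squeezed x-range from \<open>G\<^sub>1\<close> and the squeezed y-range
from \<open>G\<^sub>2\<close>. Increasing maps preserve visibility, and the rectangle of \<open>v\<close> has only
shrunk in a direction in which it saw nothing. Finally, for \<open>u\<close> in \<open>G\<^sub>1\<close> and
\<open>w\<close> in \<open>G\<^sub>2\<close> other than \<open>v\<close>, the x-range of \<open>u\<close> now lies in that of
\<open>v\<close> in \<open>G\<^sub>2\<close>, which \<open>w\<close> does not meet, and symmetrically for the y-ranges, so
\<open>u\<close> and \<open>w\<close> do not see each other.\<close>

lemma sees_h_iff: "sees_h R S \<longleftrightarrow> yint R \<inter> yint S \<noteq> {}"
  unfolding sees_h_def by auto

lemma sees_v_iff: "sees_v R S \<longleftrightarrow> xint R \<inter> xint S \<noteq> {}"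
  unfolding sees_v_def by auto

lemma sees_h_commute: "sees_h R S \<longleftrightarrow> sees_h S R"
  unfolding sees_h_def by auto

lemma sees_v_commute: "sees_v R S \<longleftrightarrow> sees_v S R"
  unfolding sees_v_def by auto

lemma valid_rect_iff_nonempty: "valid_rect R \<longleftrightarrow> xint R \<noteq> {} \<and> yint R \<noteq> {}"
  unfolding valid_rect_def xint_def yint_def by (simp add: not_le)

lemma valid_rect_iff_sees_self: "valid_rect R \<longleftrightarrow> sees_h R R \<and> sees_v R R"
  unfolding valid_rect_iff_nonempty sees_h_iff sees_v_iff by auto

lemma rect_interior_disjoint_iff:
  "rect_interior R \<inter> rect_interior S = {} \<longleftrightarrow> \<not> (sees_h R S \<and> sees_v R S)"
  unfolding rect_interior_def sees_h_iff sees_v_iff by auto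

lemma trvg_rep_iff_sees:
  "trvg_rep V E r \<longleftrightarrow>
     (\<forall>u\<in>V. sees_h (r u) (r u) \<and> sees_v (r u) (r u)) \<and>
     (\<forall>u\<in>V. \<forall>w\<in>V. u \<noteq> w \<longrightarrow> \<not> (sees_h (r u) (r w) \<and> sees_v (r u) (r w))) \<and>
     (\<forall>u\<in>V. \<forall>w\<in>V. u \<noteq> w \<longrightarrow>
        ({u, w} \<in> E \<longleftrightarrow> sees_h (r u) (r w) \<or> sees_v (r u) (r w)))"
  unfolding trvg_rep_def valid_rect_iff_sees_self rect_interior_disjoint_iff by simp

lemma trvg_rep_cong_sees:
  assumes "trvg_rep V E r'"
    and "\<And>u w. u \<in> V \<Longrightarrow> w \<in> V \<Longrightarrow> sees_h (r u) (r w) \<longleftrightarrow> sees_h (r' u) (r' w)"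
    and "\<And>u w. u \<in> V \<Longrightarrow> w \<in> V \<Longrightarrow> sees_v (r u) (r w) \<longleftrightarrow> sees_v (r' u) (r' w)"
  shows "trvg_rep V E r"
  using assms unfolding trvg_rep_iff_sees by simp

definition map_rect :: "(real \<Rightarrow> real) \<Rightarrow> (real \<Rightarrow> real) \<Rightarrow> rect \<Rightarrow> rect" where
  "map_rect f g R = ((f (fst (fst R)), f (snd (fst R))), (g (fst (snd R)), g (snd (snd R))))"

lemma sees_v_map_rect:
  assumes "strict_mono f"
  shows "sees_v (map_rect f g R) (map_rect f g S) \<longleftrightarrow> sees_v R S"
  using assms unfolding sees_v_iff xint_def map_rect_def
  by (simp add: strict_mono_less_eq min_le_iff_disj le_max_iff_disj)

lemma sees_h_map_rect:
  assumes "strict_mono g"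
  shows "sees_h (map_rect f g R) (map_rect f g S) \<longleftrightarrow> sees_h R S"
  using assms unfolding sees_h_iff yint_def map_rect_def
  by (simp add: strict_mono_less_eq min_le_iff_disj le_max_iff_disj)

lemma valid_rect_map_rect:
  "strict_mono f \<Longrightarrow> strict_mono g \<Longrightarrow> valid_rect (map_rect f g R) \<longleftrightarrow> valid_rect R"
  unfolding valid_rect_def map_rect_def by (simp add: strict_mono_less)

lemma xint_map_rect_id [simp]: "xint (map_rect id g R) = xint R"
  unfolding xint_def map_rect_def by simp

lemma yint_map_rect_id [simp]: "yint (map_rect f id R) = yint R"
  unfolding yint_def map_rect_def by simp

lemma xint_map_rect_subset:
  assumes "\<And>t. f t \<in> {a<..<b}"
  shows "xint (map_rect f g R) \<subseteq> {a<..<b}"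
  using assms[of "fst (fst R)"] assms[of "snd (fst R)"] unfolding xint_def map_rect_def by auto

lemma yint_map_rect_subset:
  assumes "\<And>t. g t \<in> {a<..<b}"
  shows "yint (map_rect f g R) \<subseteq> {a<..<b}"
  using assms[of "fst (snd R)"] assms[of "snd (snd R)"] unfolding yint_def map_rect_def by auto

definition squash :: "real \<Rightarrow> real \<Rightarrow> real \<Rightarrow> real" where
  "squash a b t = a + (b - a) * ((arctan t + pi / 2) / pi)"

lemma strict_mono_squash: "a < b \<Longrightarrow> strict_mono (squash a b)"
  unfolding strict_mono_def squash_def by (simp add: divide_strict_right_mono arctan_less_iff)

lemma squash_in_interval:
  assumes "a < b" shows "squash a b t \<in> {a<..<b}"
proof -
  define s where "s = (arctan t + pi / 2) / pi"
  have "0 < s" "s < 1"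
    using arctan_bounded[of t] by (auto simp: s_def field_simps)
  then have "0 < (b - a) * s" "(b - a) * s < b - a"
    using assms by (simp_all add: mult_less_cancel_left1)
  then show ?thesis unfolding squash_def s_def[symmetric] by simp
qed

definition transpose_rect :: "rect \<Rightarrow> rect" where
  "transpose_rect R = (snd R, fst R)"

lemma sees_h_transpose_rect [simp]:
  "sees_h (transpose_rect R) (transpose_rect S) \<longleftrightarrow> sees_v R S"
  unfolding transpose_rect_def sees_h_def sees_v_def xint_def yint_def by simp

lemma sees_v_transpose_rect [simp]:
  "sees_v (transpose_rect R) (transpose_rect S) \<longleftrightarrow> sees_h R S"
  unfolding transpose_rect_def sees_h_def sees_v_def xint_def yint_def by simp

lemma xint_transpose_rect [simp]: "xint (transpose_rect R) = yint R"
  unfolding transpose_rect_def xint_def yint_def by simp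

lemma yint_transpose_rect [simp]: "yint (transpose_rect R) = xint R"
  unfolding transpose_rect_def xint_def yint_def by simp

lemma trvg_rep_transpose_rect_iff:
  "trvg_rep V E (transpose_rect \<circ> r) \<longleftrightarrow> trvg_rep V E r"
  unfolding trvg_rep_iff_sees comp_apply sees_h_transpose_rect sees_v_transpose_rect by blast

definition h_isolated :: "('a \<Rightarrow> rect) \<Rightarrow> 'a set \<Rightarrow> 'a \<Rightarrow> bool" where
  "h_isolated r V v \<longleftrightarrow> (\<forall>w\<in>V - {v}. \<not> sees_h (r v) (r w))"

definition v_isolated :: "('a \<Rightarrow> rect) \<Rightarrow> 'a set \<Rightarrow> 'a \<Rightarrow> bool" where
  "v_isolated r V v \<longleftrightarrow> (\<forall>w\<in>V - {v}. \<not> sees_v (r v) (r w))"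

lemma h_isolated_transpose_rect_iff:
  "h_isolated (transpose_rect \<circ> r) V v \<longleftrightarrow> v_isolated r V v"
  unfolding h_isolated_def v_isolated_def by simp

lemma v_isolated_transpose_rect_iff:
  "v_isolated (transpose_rect \<circ> r) V v \<longleftrightarrow> h_isolated r V v"
  unfolding h_isolated_def v_isolated_def by simp

lemma ex_h_isolated_trvg_rep:
  assumes "\<exists>r. trvg_rep V E r \<and> (h_isolated r V v \<or> v_isolated r V v)"
  shows "\<exists>r. trvg_rep V E r \<and> h_isolated r V v"
  using assms trvg_rep_transpose_rect_iff h_isolated_transpose_rect_iff by metis

lemma ex_v_isolated_trvg_rep:
  assumes "\<exists>r. trvg_rep V E r \<and> (h_isolated r V v \<or> v_isolated r V v)"
  shows "\<exists>r. trvg_rep V E r \<and> v_isolated r V v"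
  using assms trvg_rep_transpose_rect_iff v_isolated_transpose_rect_iff by metis

lemma trvg_rep_shrink_h_isolated:
  assumes rep: "trvg_rep V E r'" and iso: "h_isolated r' V v"
    and sees_v_eq: "\<And>u w. u \<in> V \<Longrightarrow> w \<in> V \<Longrightarrow> sees_v (r u) (r w) \<longleftrightarrow> sees_v (r' u) (r' w)"
    and yint_eq: "\<And>u. u \<in> V - {v} \<Longrightarrow> yint (r u) = yint (r' u)"
    and yint_v: "yint (r v) \<subseteq> yint (r' v)" "yint (r v) \<noteq> {}"
  shows "trvg_rep V E r"
proof (rule trvg_rep_cong_sees[OF rep _ sees_v_eq])
  have apart: "\<not> sees_h (r v) (r w) \<and> \<not> sees_h (r' v) (r' w)" if "w \<in> V - {v}" for w
    using iso yint_v(1) yint_eq[OF that] that unfolding h_isolated_def sees_h_iff by blast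
  fix u w assume "u \<in> V" "w \<in> V"
  then consider "u = v" "w = v" | "u = v" "w \<in> V - {v}" | "w = v" "u \<in> V - {v}"
    | "u \<in> V - {v}" "w \<in> V - {v}" by blast
  then show "sees_h (r u) (r w) \<longleftrightarrow> sees_h (r' u) (r' w)"
  proof cases
    case 1
    then show ?thesis using yint_v(1,2) by (auto simp: sees_h_iff)
  next
    case 2
    then show ?thesis using apart by simp
  next
    case 3
    then show ?thesis using apart sees_h_commute by metis
  next
    case 4
    then show ?thesis using yint_eq by (simp add: sees_h_iff)
  qed
qed

lemma trvg_rep_shrink_v_isolated:
  assumes rep: "trvg_rep V E r'" and iso: "v_isolated r' V v"
    and sees_h_eq: "\<And>u w. u \<in> V \<Longrightarrow> w \<in> V \<Longrightarrow> sees_h (r u) (r w) \<longleftrightarrow> sees_h (r' u) (r' w)"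
    and xint_eq: "\<And>u. u \<in> V - {v} \<Longrightarrow> xint (r u) = xint (r' u)"
    and xint_v: "xint (r v) \<subseteq> xint (r' v)" "xint (r v) \<noteq> {}"
  shows "trvg_rep V E r"
proof -
  have "trvg_rep V E (transpose_rect \<circ> r)"
    by (rule trvg_rep_shrink_h_isolated[where r' = "transpose_rect \<circ> r'" and v = v])
      (use assms in \<open>simp_all add: trvg_rep_transpose_rect_iff h_isolated_transpose_rect_iff\<close>)
  then show ?thesis by (simp add: trvg_rep_transpose_rect_iff)
qed

lemma simple_graph_edges_subset: "simple_graph V E \<Longrightarrow> E \<subseteq> Pow V"
  unfolding simple_graph_def by fastforce

lemma simple_graph_Un:
  "simple_graph V1 E1 \<Longrightarrow> simple_graph V2 E2 \<Longrightarrow> simple_graph (V1 \<union> V2) (E1 \<union> E2)"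
  unfolding simple_graph_def by (metis UnE UnCI finite_Un)

lemma trvg_rep_Un:
  assumes rep1: "trvg_rep V1 E1 r" and rep2: "trvg_rep V2 E2 r"
    and edges1: "E1 \<subseteq> Pow V1" and edges2: "E2 \<subseteq> Pow V2"
    and apart: "\<And>u w. u \<in> V1 - V2 \<Longrightarrow> w \<in> V2 - V1 \<Longrightarrow>
                  \<not> sees_h (r u) (r w) \<and> \<not> sees_v (r u) (r w)"
  shows "trvg_rep (V1 \<union> V2) (E1 \<union> E2) r"
proof -
  have rep_pair: "\<not> (sees_h (r u) (r w) \<and> sees_v (r u) (r w)) \<and>
      ({u, w} \<in> E \<longleftrightarrow> sees_h (r u) (r w) \<or> sees_v (r u) (r w))"
    if "trvg_rep V E r" "u \<in> V" "w \<in> V" "u \<noteq> w" for V E u w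
    using that unfolding trvg_rep_iff_sees by blast
  have pair: "\<not> (sees_h (r u) (r w) \<and> sees_v (r u) (r w)) \<and>
      ({u, w} \<in> E1 \<union> E2 \<longleftrightarrow> sees_h (r u) (r w) \<or> sees_v (r u) (r w))"
    if u: "u \<in> V1 \<union> V2" and w: "w \<in> V1 \<union> V2" and "u \<noteq> w" for u w
  proof -
    consider "u \<in> V1" "w \<in> V1" | "u \<in> V2" "w \<in> V2" | "u \<in> V1 - V2" "w \<in> V2 - V1"
      | "w \<in> V1 - V2" "u \<in> V2 - V1"
      using u w by blast
    then show ?thesis
    proof cases
      case 1
      have "{u, w} \<in> E2 \<Longrightarrow> sees_h (r u) (r w) \<or> sees_v (r u) (r w)"
        using edges2 rep_pair[OF rep2, of u w] \<open>u \<noteq> w\<close> by auto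
      then show ?thesis using rep_pair[OF rep1 1 \<open>u \<noteq> w\<close>] by blast
    next
      case 2
      have "{u, w} \<in> E1 \<Longrightarrow> sees_h (r u) (r w) \<or> sees_v (r u) (r w)"
        using edges1 rep_pair[OF rep1, of u w] \<open>u \<noteq> w\<close> by auto
      then show ?thesis using rep_pair[OF rep2 2 \<open>u \<noteq> w\<close>] by blast
    next
      case 3
      then show ?thesis using apart[OF 3] edges1 edges2 by auto
    next
      case 4
      then show ?thesis using apart[OF 4] edges1 edges2 sees_h_commute sees_v_commute by auto
    qed
  qed
  have rep_self: "sees_h (r u) (r u) \<and> sees_v (r u) (r u)" if "trvg_rep V E r" "u \<in> V" for V E u
    using that unfolding trvg_rep_iff_sees by blast
  show ?thesis
    unfolding trvg_rep_iff_sees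
    by (intro conjI ballI impI) (use pair rep_self[OF rep1] rep_self[OF rep2] in blast)+
qed

locale trvg_gluing =
  fixes V1 V2 :: "'a set" and E1 E2 :: "'a set set" and r1 r2 :: "'a \<Rightarrow> rect" and v :: 'a
  assumes rep1: "trvg_rep V1 E1 r1" and rep2: "trvg_rep V2 E2 r2"
    and cut_vertex: "V1 \<inter> V2 = {v}"
    and iso1: "h_isolated r1 V1 v" and iso2: "v_isolated r2 V2 v"
begin

definition squash_x :: "real \<Rightarrow> real" where
  "squash_x = squash (fst (fst (r2 v))) (snd (fst (r2 v)))"

definition squash_y :: "real \<Rightarrow> real" where
  "squash_y = squash (fst (snd (r1 v))) (snd (snd (r1 v)))"

definition glued :: "'a \<Rightarrow> rect" where
  "glued u = (if u = v then map_rect squash_x squash_y (fst (r1 v), snd (r2 v))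
     else if u \<in> V1 then map_rect squash_x id (r1 u) else map_rect id squash_y (r2 u))"

lemma valid_rect_v: "valid_rect (r1 v)" "valid_rect (r2 v)"
  using rep1 rep2 cut_vertex unfolding trvg_rep_def by auto

lemma strict_mono_squash_x: "strict_mono squash_x"
  using valid_rect_v(2) unfolding squash_x_def valid_rect_def by (simp add: strict_mono_squash)

lemma strict_mono_squash_y: "strict_mono squash_y"
  using valid_rect_v(1) unfolding squash_y_def valid_rect_def by (simp add: strict_mono_squash)

lemma squash_x_in_xint: "squash_x t \<in> {fst (fst (r2 v))<..<snd (fst (r2 v))}"
  using valid_rect_v(2) unfolding squash_x_def valid_rect_def by (rule squash_in_interval[OF conjunct1])

lemma squash_y_in_yint: "squash_y t \<in> {fst (snd (r1 v))<..<snd (snd (r1 v))}"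
  using valid_rect_v(1) unfolding squash_y_def valid_rect_def by (rule squash_in_interval[OF conjunct2])

lemma xint_glued_V1: "u \<in> V1 \<Longrightarrow> xint (glued u) = xint (map_rect squash_x id (r1 u))"
  unfolding glued_def xint_def map_rect_def by auto

lemma yint_glued_V1: "u \<in> V1 - {v} \<Longrightarrow> yint (glued u) = yint (r1 u)"
  unfolding glued_def by simp

lemma yint_glued_V2: "u \<in> V2 \<Longrightarrow> yint (glued u) = yint (map_rect id squash_y (r2 u))"
  using cut_vertex unfolding glued_def yint_def map_rect_def by auto

lemma xint_glued_V2: "u \<in> V2 - {v} \<Longrightarrow> xint (glued u) = xint (r2 u)"
  using cut_vertex unfolding glued_def by auto

lemma xint_glued_V1_subset: "u \<in> V1 \<Longrightarrow> xint (glued u) \<subseteq> xint (r2 v)"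
  using xint_map_rect_subset[OF squash_x_in_xint] by (simp add: xint_glued_V1 xint_def[of "r2 v"])

lemma yint_glued_V2_subset: "u \<in> V2 \<Longrightarrow> yint (glued u) \<subseteq> yint (r1 v)"
  using yint_map_rect_subset[OF squash_y_in_yint] by (simp add: yint_glued_V2 yint_def[of "r1 v"])

lemma valid_rect_glued_v: "valid_rect (glued v)"
  using valid_rect_v unfolding glued_def
  by (simp add: valid_rect_map_rect strict_mono_squash_x strict_mono_squash_y) (simp add: valid_rect_def)

lemma trvg_rep_glued_V1: "trvg_rep V1 E1 glued"
proof (rule trvg_rep_shrink_h_isolated[OF rep1 iso1])
  show "sees_v (glued u) (glued w) \<longleftrightarrow> sees_v (r1 u) (r1 w)" if "u \<in> V1" "w \<in> V1" for u w
    using sees_v_map_rect[OF strict_mono_squash_x, of id "r1 u" "r1 w"] that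
    by (simp add: sees_v_iff xint_glued_V1)
  show "yint (glued u) = yint (r1 u)" if "u \<in> V1 - {v}" for u
    using that by (rule yint_glued_V1)
  show "yint (glued v) \<subseteq> yint (r1 v)"
    using yint_glued_V2_subset cut_vertex by blast
  show "yint (glued v) \<noteq> {}"
    using valid_rect_glued_v valid_rect_iff_nonempty by blast
qed

lemma trvg_rep_glued_V2: "trvg_rep V2 E2 glued"
proof (rule trvg_rep_shrink_v_isolated[OF rep2 iso2])
  show "sees_h (glued u) (glued w) \<longleftrightarrow> sees_h (r2 u) (r2 w)" if "u \<in> V2" "w \<in> V2" for u w
    using sees_h_map_rect[OF strict_mono_squash_y, of id "r2 u" "r2 w"] that
    by (simp add: sees_h_iff yint_glued_V2)
  show "xint (glued u) = xint (r2 u)" if "u \<in> V2 - {v}" for u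
    using that by (rule xint_glued_V2)
  show "xint (glued v) \<subseteq> xint (r2 v)"
    using xint_glued_V1_subset cut_vertex by blast
  show "xint (glued v) \<noteq> {}"
    using valid_rect_glued_v valid_rect_iff_nonempty by blast
qed

lemma glued_apart:
  assumes u: "u \<in> V1 - V2" and w: "w \<in> V2 - V1"
  shows "\<not> sees_h (glued u) (glued w) \<and> \<not> sees_v (glued u) (glued w)"
proof -
  have u': "u \<in> V1 - {v}" and w': "w \<in> V2 - {v}"
    using u w cut_vertex by auto
  have "yint (r1 v) \<inter> yint (r1 u) = {}"
    using iso1 u' unfolding h_isolated_def sees_h_iff by blast
  moreover have "xint (r2 v) \<inter> xint (r2 w) = {}"
    using iso2 w' unfolding v_isolated_def sees_v_iff by blast
  ultimately show ?thesis
    using yint_glued_V1[OF u'] yint_glued_V2_subset[of w] xint_glued_V1_subset[of u]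
      xint_glued_V2[OF w'] u w
    unfolding sees_h_iff sees_v_iff by blast
qed

end

theorem lemma1:
  fixes V1 V2 :: "'a set" and E1 E2 :: "'a set set" and v :: 'a
  assumes "TRVG V1 E1" and "TRVG V2 E2"
    and "V1 \<inter> V2 = {v}"
    and "\<exists>r1. trvg_rep V1 E1 r1 \<and>
           ((\<forall>w\<in>V1 - {v}. \<not> sees_h (r1 v) (r1 w)) \<or> (\<forall>w\<in>V1 - {v}. \<not> sees_v (r1 v) (r1 w)))"
    and "\<exists>r2. trvg_rep V2 E2 r2 \<and>
           ((\<forall>w\<in>V2 - {v}. \<not> sees_h (r2 v) (r2 w)) \<or> (\<forall>w\<in>V2 - {v}. \<not> sees_v (r2 v) (r2 w)))"
  shows "TRVG (V1 \<union> V2) (E1 \<union> E2)"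
proof -
  have sg: "simple_graph V1 E1" "simple_graph V2 E2"
    using assms(1,2) unfolding TRVG_def by blast+
  obtain r1 where r1: "trvg_rep V1 E1 r1" "h_isolated r1 V1 v"
    using ex_h_isolated_trvg_rep[OF assms(4)[folded h_isolated_def v_isolated_def]] by blast
  obtain r2 where r2: "trvg_rep V2 E2 r2" "v_isolated r2 V2 v"
    using ex_v_isolated_trvg_rep[OF assms(5)[folded h_isolated_def v_isolated_def]] by blast
  interpret trvg_gluing V1 V2 E1 E2 r1 r2 v
    using r1 r2 assms(3) by unfold_locales
  have "trvg_rep (V1 \<union> V2) (E1 \<union> E2) glued"
    using trvg_rep_glued_V1 trvg_rep_glued_V2 simple_graph_edges_subset[OF sg(1)]
      simple_graph_edges_subset[OF sg(2)] glued_apart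
    by (rule trvg_rep_Un)
  then show ?thesis
    using simple_graph_Un[OF sg] unfolding TRVG_def by blast
qed

end
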